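(* Let $n\ge 2$ and $\gamma_1,\dots,\gamma_n>0$. Let $A\in\mathbb{R}^{n\times n}$ be the matrix with $A_{ii}=-1$ for $i=1,\dots,n$, $A_{1n}=-\gamma_1$, $A_{i,i-1}=\gamma_i$ for $i=2,\dots,n$, and all other entries equal to $0$, i.e. $$A=\begin{bmatrix} -1 & 0 & \cdots & 0 & -\gamma_1\\ \gamma_2 & -1 & & & 0\\ 0&\gamma_3&-1&&\vdots\\ \vdots&&\ddots&\ddots&0\\ 0&\cdots&0&\gamma_n&-1\end{bmatrix}.$$ Then there exists a diagonal matrix $D$ with positive diagonal entries such that $DA+A^TD$ is negative definite if and only if $$\cos(\pi/n)\,(\gamma_1\gamma_2\cdots\gamma_n)^{1/n}<1,$$ which for $n\ge 3$ is equivalent to $\gamma_1\cdots\gamma_n<\sec(\pi/n)^n$ (and for $n=2$ holds for all positive $\gamma_1,\gamma_2$).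
   Context: A matrix $A$ is called diagonally stable if $DA+A^TD<0$ (negative definite) for some diagonal $D>0$. *)

theory Defs
  imports Complex_Main "Jordan_Normal_Form.Matrix"
begin

definition negative_definite :: "real mat \<Rightarrow> bool" where
  "negative_definite M \<longleftrightarrow> square_mat M \<and>
     (\<forall>x \<in> carrier_vec (dim_row M). x \<noteq> 0\<^sub>v (dim_row M) \<longrightarrow> x \<bullet> (M *\<^sub>v x) < 0)"

definition diagonally_stable :: "real mat \<Rightarrow> bool" where
  "diagonally_stable A \<longleftrightarrow> (\<exists>D \<in> carrier_mat (dim_row A) (dim_row A).
     diagonal_mat D \<and> (\<forall>i < dim_row A. D $$ (i,i) > 0) \<and>
     negative_definite (D * A + transpose_mat A * D))"

text \<open>The cyclic matrix of the statement, 0-based indices: gamma 0 is gamma_1.\<close>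
definition cyclic_mat :: "nat \<Rightarrow> (nat \<Rightarrow> real) \<Rightarrow> real mat" where
  "cyclic_mat n \<gamma> = mat n n (\<lambda>(i,j).
     if i = j then -1
     else if i = 0 \<and> j = n - 1 then - \<gamma> 0
     else if 0 < i \<and> j = i - 1 then \<gamma> i
     else 0)"

end

theory Submission
  imports Defs
begin

text \<open>
  Conjugating A by a positive diagonal matrix R preserves diagonal stability (D becomes R D R),
  and the choice r_i = gamma_2 ... gamma_i / G^(i-1), with G the geometric mean of the gamma_i,
  replaces every gamma_i by G. For this balanced matrix
  x^T (D A + A^T D) x = 2 * sum_i d_i x_i (G x'_(i-1) - x_i), where x'_(i-1) is the cyclic
  predecessor of x_i with the sign flipped across the corner. If G cos(pi/n) < 1, then D = I works:
  the twisted cycle form sum_i x_i x'_(i-1) is at most cos(pi/n) |x|^2, by an explicit sum of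
  squares. Conversely, on the real and imaginary parts of the vector (exp (sqrt(-1) j pi/n))_j, an
  eigenvector of the twisted cycle, the two Lyapunov forms add up to (G cos(pi/n) - 1) sum_i d_i,
  so their negativity forces G cos(pi/n) < 1.
\<close>

definition twisted_pred :: "nat \<Rightarrow> (nat \<Rightarrow> real) \<Rightarrow> nat \<Rightarrow> real" where
  "twisted_pred n x i = (if i = 0 then - x (n - 1) else x (i - 1))"

text \<open>
  The twisted cycle form on y_0, ..., y_m, z (z closing the cycle), with the weights of y_m, z
  and of the edge y_m z tuned so that it vanishes for m = 0 and each step from m to m + 1 adds a
  perfect square. For theta = pi/n and m + 2 = n the tuned weights are the true ones, cos theta
  and 1.
\<close>
definition tuned_cycle_form :: "real \<Rightarrow> (nat \<Rightarrow> real) \<Rightarrow> real \<Rightarrow> nat \<Rightarrow> real" where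
  "tuned_cycle_form \<theta> y z m = cos \<theta> * (\<Sum>j<m. (y j)\<^sup>2)
     + sin (real m * \<theta>) / (2 * sin ((real m + 1) * \<theta>)) * ((y m)\<^sup>2 + z\<^sup>2)
     - (\<Sum>k<m. y k * y (Suc k)) + y 0 * z - sin \<theta> / sin ((real m + 1) * \<theta>) * y m * z"

lemma tuned_cycle_form_Suc:
  assumes pos: "sin ((real m + 1) * \<theta>) > 0" "sin ((real m + 2) * \<theta>) > 0"
  shows "tuned_cycle_form \<theta> y z (Suc m) = tuned_cycle_form \<theta> y z m +
     (sin ((real m + 2) * \<theta>) * y m - sin ((real m + 1) * \<theta>) * y (Suc m) + sin \<theta> * z)\<^sup>2
       / (2 * sin ((real m + 1) * \<theta>) * sin ((real m + 2) * \<theta>))"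
proof -
  define a where "a = sin (real m * \<theta>)"
  define b where "b = sin ((real m + 1) * \<theta>)"
  define e where "e = sin ((real m + 2) * \<theta>)"
  have a: "a = sin ((real m + 1) * \<theta> - \<theta>)" and e: "e = sin ((real m + 1) * \<theta> + \<theta>)"
    by (simp_all add: a_def e_def algebra_simps)
  have sum_ae: "a + e = 2 * cos \<theta> * b"
    unfolding a e b_def by (simp add: sin_add sin_diff)
  have cos_eq: "cos \<theta> = (a + e) / (2 * b)"
    using sum_ae pos(1) by (simp add: b_def field_simps)
  have sq_b: "b\<^sup>2 - a * e = (sin \<theta>)\<^sup>2"
  proof -
    have "sin (x - t) * sin (x + t) = (sin x)\<^sup>2 - (sin t)\<^sup>2" for x t :: real
    proof -
      have "sin (x - t) * sin (x + t) = (sin x)\<^sup>2 * (cos t)\<^sup>2 - (cos x)\<^sup>2 * (sin t)\<^sup>2"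
        by (simp add: sin_add sin_diff power2_eq_square algebra_simps)
      then show ?thesis by (simp add: cos_squared_eq algebra_simps)
    qed
    from this[of "(real m + 1) * \<theta>" \<theta>] show ?thesis unfolding a e b_def by simp
  qed
  have "tuned_cycle_form \<theta> y z (Suc m) - tuned_cycle_form \<theta> y z m
      = cos \<theta> * (y m)\<^sup>2 + b / (2 * e) * ((y (Suc m))\<^sup>2 + z\<^sup>2) - y m * y (Suc m)
        - sin \<theta> / e * y (Suc m) * z - a / (2 * b) * ((y m)\<^sup>2 + z\<^sup>2) + sin \<theta> / b * y m * z"
    by (simp add: tuned_cycle_form_def a_def b_def e_def algebra_simps)
  also have "\<dots> = ((e * y m - b * y (Suc m))\<^sup>2 + 2 * sin \<theta> * z * (e * y m - b * y (Suc m))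
      + (b\<^sup>2 - a * e) * z\<^sup>2) / (2 * b * e)"
    using pos unfolding b_def[symmetric] e_def[symmetric] cos_eq by (simp add: field_simps power2_eq_square)
  also have "\<dots> = (e * y m - b * y (Suc m) + sin \<theta> * z)\<^sup>2 / (2 * b * e)"
    unfolding sq_b by (simp add: power2_eq_square algebra_simps)
  finally show ?thesis by (simp add: b_def e_def)
qed

lemma tuned_cycle_form_nonneg:
  assumes "\<And>j. 1 \<le> j \<Longrightarrow> j \<le> m + 1 \<Longrightarrow> sin (real j * \<theta>) > 0"
  shows "tuned_cycle_form \<theta> y z m \<ge> 0"
  using assms
proof (induction m)
  case 0
  then have "sin \<theta> > 0" by (metis le_refl add_0 mult_1 of_nat_1)
  then show ?case by (simp add: tuned_cycle_form_def)
next
  case (Suc m)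
  have pos: "sin ((real m + 1) * \<theta>) > 0" "sin ((real m + 2) * \<theta>) > 0"
    using Suc.prems[of "m + 1"] Suc.prems[of "m + 2"] by (simp_all add: add.commute)
  have "tuned_cycle_form \<theta> y z m \<ge> 0" using Suc by simp
  then show ?case using pos by (simp add: tuned_cycle_form_Suc)
qed

definition twisted_cycle_form :: "nat \<Rightarrow> (nat \<Rightarrow> real) \<Rightarrow> real" where
  "twisted_cycle_form n y = (\<Sum>i<n. y i * twisted_pred n y i)"

lemma twisted_cycle_form_le:
  assumes "n \<ge> 2"
  shows "twisted_cycle_form n y \<le> cos (pi / n) * (\<Sum>i<n. (y i)\<^sup>2)"
proof -
  obtain m where n: "n = Suc (Suc m)" using assms by (metis add_2_eq_Suc le_Suc_ex)
  define \<theta> where "\<theta> = pi / n"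
  have n_\<theta>: "real n * \<theta> = pi" using assms by (simp add: \<theta>_def)
  have pos: "sin (real j * \<theta>) > 0" if "1 \<le> j" "j \<le> m + 1" for j
  proof (rule sin_gt_zero)
    show "0 < real j * \<theta>" using that assms by (simp add: \<theta>_def)
    have "real j * \<theta> < real n * \<theta>"
      using that n assms by (intro mult_strict_right_mono) (simp_all add: \<theta>_def)
    then show "real j * \<theta> < pi" using n_\<theta> by simp
  qed
  have "(real m + 1) * \<theta> = pi - \<theta>" and "real m * \<theta> = pi - 2 * \<theta>"
    using n_\<theta> by (simp_all add: n algebra_simps)
  then have sin_last: "sin ((real m + 1) * \<theta>) = sin \<theta>"
      "sin (real m * \<theta>) = 2 * sin \<theta> * cos \<theta>"
    by (simp_all add: sin_double)
  have "twisted_cycle_form n y = (\<Sum>k<Suc m. y (Suc k) * y k) - y 0 * y (Suc m)"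
    unfolding twisted_cycle_form_def n sum.lessThan_Suc_shift
    by (simp add: twisted_pred_def del: sum.lessThan_Suc)
  also have "(\<Sum>k<Suc m. y (Suc k) * y k) = (\<Sum>k<m. y k * y (Suc k)) + y m * y (Suc m)"
    by (simp add: mult.commute)
  finally have "tuned_cycle_form \<theta> y (y (Suc m)) m
      = cos \<theta> * (\<Sum>i<n. (y i)\<^sup>2) - twisted_cycle_form n y"
    using pos[of 1] unfolding tuned_cycle_form_def sin_last by (simp add: n algebra_simps power2_eq_square)
  moreover have "tuned_cycle_form \<theta> y (y (Suc m)) m \<ge> 0"
    using pos by (rule tuned_cycle_form_nonneg)
  ultimately show ?thesis by (simp add: \<theta>_def)
qed

lemma diagonal_mat_mult_vec:
  assumes "D \<in> carrier_mat n n" "diagonal_mat D" "v \<in> carrier_vec n"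
  shows "D *\<^sub>v v = vec n (\<lambda>i. D $$ (i, i) * v $ i)"
proof (rule eq_vecI)
  fix i assume "i < dim_vec (vec n (\<lambda>i. D $$ (i, i) * v $ i))"
  then have i: "i < n" by simp
  have "(D *\<^sub>v v) $ i = (\<Sum>j\<in>{0..<n}. D $$ (i, j) * v $ j)"
    using assms i by (simp add: scalar_prod_def)
  also have "\<dots> = (\<Sum>j\<in>{0..<n}. if j = i then D $$ (i, i) * v $ i else 0)"
    using assms i by (intro sum.cong) (auto simp: diagonal_mat_def)
  finally show "(D *\<^sub>v v) $ i = vec n (\<lambda>i. D $$ (i, i) * v $ i) $ i" using i by simp
qed (use assms in simp)

lemma lyapunov_form_diagonal:
  fixes A D :: "'a :: comm_semiring_1 mat"
  assumes A: "A \<in> carrier_mat n n" and D: "D \<in> carrier_mat n n" "diagonal_mat D"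
    and v: "v \<in> carrier_vec n"
  shows "v \<bullet> ((D * A + transpose_mat A * D) *\<^sub>v v)
    = 2 * (\<Sum>i<n. D $$ (i, i) * v $ i * (A *\<^sub>v v) $ i)"
proof -
  have weighted: "u \<bullet> (D *\<^sub>v w) = (\<Sum>i<n. u $ i * (D $$ (i, i) * w $ i))"
    if "u \<in> carrier_vec n" "w \<in> carrier_vec n" for u w
    using that D unfolding diagonal_mat_mult_vec[OF D that(2)]
    by (auto simp: scalar_prod_def atLeast0LessThan intro!: sum.cong)
  define w where "w = A *\<^sub>v v"
  have w: "w \<in> carrier_vec n" using A v by (simp add: w_def)
  have transposed: "v \<bullet> (transpose_mat A *\<^sub>v (D *\<^sub>v v)) = w \<bullet> (D *\<^sub>v v)"
  proof -
    have "v \<bullet> (transpose_mat A *\<^sub>v (D *\<^sub>v v)) = (transpose_mat A *\<^sub>v (D *\<^sub>v v)) \<bullet> v"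
      using A D v by (intro comm_scalar_prod[of _ n]) auto
    also have "\<dots> = (D *\<^sub>v v) \<bullet> w"
      unfolding w_def using A D v by (intro transpose_vec_mult_scalar) auto
    also have "\<dots> = w \<bullet> (D *\<^sub>v v)"
      using D v w by (intro comm_scalar_prod[of _ n]) auto
    finally show ?thesis .
  qed
  have "(D * A + transpose_mat A * D) *\<^sub>v v = D *\<^sub>v w + transpose_mat A *\<^sub>v (D *\<^sub>v v)"
    using A D v by (subst add_mult_distrib_mat_vec[of _ n n]) (auto simp: w_def)
  then have "v \<bullet> ((D * A + transpose_mat A * D) *\<^sub>v v)
      = v \<bullet> (D *\<^sub>v w) + w \<bullet> (D *\<^sub>v v)"
    using A D v w by (simp add: scalar_prod_add_distrib[of _ n] transposed)
  also have "\<dots> = (\<Sum>i<n. v $ i * (D $$ (i, i) * w $ i)) + (\<Sum>i<n. w $ i * (D $$ (i, i) * v $ i))"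
    using v w by (simp only: weighted)
  also have "\<dots> = 2 * (\<Sum>i<n. D $$ (i, i) * v $ i * w $ i)"
    unfolding mult_2 sum.distrib[symmetric] by (rule sum.cong) (simp_all add: algebra_simps)
  finally show ?thesis unfolding w_def .
qed

lemma diagonally_stable_iff_weighted_sum:
  assumes A: "A \<in> carrier_mat n n"
  shows "diagonally_stable A \<longleftrightarrow> (\<exists>d. (\<forall>i<n. d i > 0) \<and>
    (\<forall>x. (\<exists>i<n. x i \<noteq> 0) \<longrightarrow> (\<Sum>i<n. d i * x i * (\<Sum>j<n. A $$ (i, j) * x j)) < 0))"
    (is "_ \<longleftrightarrow> (\<exists>d. ?pos d \<and> ?neg d)")
proof -
  have form: "v \<bullet> ((D * A + transpose_mat A * D) *\<^sub>v v)
      = 2 * (\<Sum>i<n. D $$ (i, i) * v $ i * (\<Sum>j<n. A $$ (i, j) * v $ j))"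
    if "D \<in> carrier_mat n n" "diagonal_mat D" "v \<in> carrier_vec n" for D v
    using that A by (subst lyapunov_form_diagonal[OF A that])
      (auto simp: scalar_prod_def atLeast0LessThan intro!: sum.cong)
  show ?thesis
  proof
    assume "diagonally_stable A"
    then obtain D where D: "D \<in> carrier_mat n n" "diagonal_mat D" "\<forall>i<n. D $$ (i, i) > 0"
      and neg: "negative_definite (D * A + transpose_mat A * D)"
      using A unfolding diagonally_stable_def by auto
    have neg_sum: "?neg (\<lambda>i. D $$ (i, i))"
    proof (intro allI impI)
      fix x :: "nat \<Rightarrow> real" assume "\<exists>i<n. x i \<noteq> 0"
      then obtain i where "i < n" "x i \<noteq> 0" by blast
      then have "vec n x $ i \<noteq> 0\<^sub>v n $ i" by simp
      then have "vec n x \<noteq> 0\<^sub>v n" by metis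
      then have "vec n x \<bullet> ((D * A + transpose_mat A * D) *\<^sub>v vec n x) < 0"
        using neg A D by (auto simp: negative_definite_def)
      then show "(\<Sum>i<n. D $$ (i, i) * x i * (\<Sum>j<n. A $$ (i, j) * x j)) < 0"
        using D by (simp add: form)
    qed
    show "\<exists>d. ?pos d \<and> ?neg d"
      using D(3) neg_sum by (intro exI[of _ "\<lambda>i. D $$ (i, i)"]) simp
  next
    assume "\<exists>d. ?pos d \<and> ?neg d"
    then obtain d where pos: "?pos d" and neg: "?neg d" by blast
    define D where "D = mat n n (\<lambda>(i, j). if i = j then d i else 0)"
    have D: "D \<in> carrier_mat n n" "diagonal_mat D" "\<forall>i<n. D $$ (i, i) > 0"
      using pos by (simp_all add: D_def diagonal_mat_def)
    have "negative_definite (D * A + transpose_mat A * D)"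
      unfolding negative_definite_def
    proof (intro conjI ballI impI)
      show "square_mat (D * A + transpose_mat A * D)" using A D by simp
      fix v :: "real vec" assume "v \<in> carrier_vec (dim_row (D * A + transpose_mat A * D))"
        and "v \<noteq> 0\<^sub>v (dim_row (D * A + transpose_mat A * D))"
      then have v: "v \<in> carrier_vec n" "v \<noteq> 0\<^sub>v n" using A D by auto
      have "\<exists>i<n. v $ i \<noteq> 0"
      proof (rule ccontr)
        assume "\<not> (\<exists>i<n. v $ i \<noteq> 0)"
        then have "v = 0\<^sub>v n" using v(1) by (intro eq_vecI) auto
        with v(2) show False ..
      qed
      then have "(\<Sum>i<n. d i * v $ i * (\<Sum>j<n. A $$ (i, j) * v $ j)) < 0" using neg by blast
      moreover have "(\<Sum>i<n. D $$ (i, i) * v $ i * (\<Sum>j<n. A $$ (i, j) * v $ j))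
          = (\<Sum>i<n. d i * v $ i * (\<Sum>j<n. A $$ (i, j) * v $ j))"
        unfolding D_def by (intro sum.cong) auto
      ultimately show "v \<bullet> ((D * A + transpose_mat A * D) *\<^sub>v v) < 0"
        using D v by (simp add: form)
    qed
    with A D show "diagonally_stable A" unfolding diagonally_stable_def by (intro bexI[of _ D]) auto
  qed
qed

lemma cyclic_mat_row_sum:
  assumes "n \<ge> 2" "i < n"
  shows "(\<Sum>j<n. cyclic_mat n \<gamma> $$ (i, j) * x j) = \<gamma> i * twisted_pred n x i - x i"
proof -
  have "(\<Sum>j<n. cyclic_mat n \<gamma> $$ (i, j) * x j)
      = (\<Sum>j<n. (if j = i then - x j else 0)
          + (if j = (if i = 0 then n - 1 else i - 1) then \<gamma> i * twisted_pred n x i else 0))"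
    using assms by (intro sum.cong) (auto simp: cyclic_mat_def twisted_pred_def)
  also have "\<dots> = \<gamma> i * twisted_pred n x i - x i"
    using assms by (simp add: sum.distrib less_imp_diff_less)
  finally show ?thesis .
qed

definition cyclic_lyapunov_sum ::
    "nat \<Rightarrow> (nat \<Rightarrow> real) \<Rightarrow> (nat \<Rightarrow> real) \<Rightarrow> (nat \<Rightarrow> real) \<Rightarrow> real" where
  "cyclic_lyapunov_sum n \<gamma> d x = (\<Sum>i<n. d i * x i * (\<gamma> i * twisted_pred n x i - x i))"

lemma diagonally_stable_cyclic_mat_iff:
  assumes "n \<ge> 2"
  shows "diagonally_stable (cyclic_mat n \<gamma>) \<longleftrightarrow> (\<exists>d. (\<forall>i<n. d i > 0) \<and>
    (\<forall>x. (\<exists>i<n. x i \<noteq> 0) \<longrightarrow> cyclic_lyapunov_sum n \<gamma> d x < 0))"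
proof -
  have "cyclic_mat n \<gamma> \<in> carrier_mat n n" by (simp add: cyclic_mat_def)
  moreover have "(\<Sum>i<n. d i * x i * (\<Sum>j<n. cyclic_mat n \<gamma> $$ (i, j) * x j)) = cyclic_lyapunov_sum n \<gamma> d x"
    for d x
    unfolding cyclic_lyapunov_sum_def using assms by (intro sum.cong) (simp_all add: cyclic_mat_row_sum)
  ultimately show ?thesis by (simp add: diagonally_stable_iff_weighted_sum)
qed

lemma cyclic_lyapunov_sum_cong:
  assumes "\<forall>i<n. d i = d' i" "\<forall>i<n. x i = x' i"
  shows "cyclic_lyapunov_sum n \<gamma> d x = cyclic_lyapunov_sum n \<gamma> d' x'"
  unfolding cyclic_lyapunov_sum_def twisted_pred_def using assms by (intro sum.cong) auto

text \<open>
  If G^n = gamma_0 ... gamma_(n-1), then conjugating cyclic_mat n gamma by the diagonal matrix with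
  entries balancing_scale gamma G i gives cyclic_mat n (%_. G).
\<close>
definition balancing_scale :: "(nat \<Rightarrow> real) \<Rightarrow> real \<Rightarrow> nat \<Rightarrow> real" where
  "balancing_scale \<gamma> G i = (\<Prod>j<i. \<gamma> (Suc j)) / G ^ i"

lemma balancing_scale_pos:
  assumes "\<forall>i<n. \<gamma> i > 0" "G > 0" "i < n"
  shows "balancing_scale \<gamma> G i > 0"
  unfolding balancing_scale_def using assms by (intro divide_pos_pos prod_pos) auto

lemma twisted_pred_balancing_scale:
  assumes "G > 0" "G ^ n = (\<Prod>i<n. \<gamma> i)" "i < n"
  shows "\<gamma> i * twisted_pred n (\<lambda>j. balancing_scale \<gamma> G j * y j) i
    = G * balancing_scale \<gamma> G i * twisted_pred n y i"
proof (cases i)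
  case 0
  obtain m where n: "n = Suc m" using assms(3) by (cases n) auto
  have "\<gamma> 0 * balancing_scale \<gamma> G m = (\<Prod>i<n. \<gamma> i) / G ^ m"
    unfolding balancing_scale_def n by (simp add: prod.lessThan_Suc_shift del: prod.lessThan_Suc)
  also have "\<dots> = G ^ Suc m / G ^ m" using assms(2) by (simp add: n)
  also have "\<dots> = G" using assms(1) by simp
  finally have "\<gamma> 0 * balancing_scale \<gamma> G m = G" .
  moreover have "balancing_scale \<gamma> G 0 = 1" by (simp add: balancing_scale_def)
  ultimately show ?thesis
    using 0 by (simp add: twisted_pred_def n mult.assoc[symmetric])
next
  case (Suc k)
  then show ?thesis
    using assms(1) by (simp add: twisted_pred_def balancing_scale_def field_simps)
qed

lemma cyclic_lyapunov_sum_balance: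
  assumes "G > 0" "G ^ n = (\<Prod>i<n. \<gamma> i)"
  shows "cyclic_lyapunov_sum n \<gamma> d (\<lambda>i. balancing_scale \<gamma> G i * y i)
    = cyclic_lyapunov_sum n (\<lambda>_. G) (\<lambda>i. d i * (balancing_scale \<gamma> G i)\<^sup>2) y"
  unfolding cyclic_lyapunov_sum_def
proof (intro sum.cong refl)
  fix i assume "i \<in> {..<n}"
  then have "\<gamma> i * twisted_pred n (\<lambda>j. balancing_scale \<gamma> G j * y j) i
      = G * balancing_scale \<gamma> G i * twisted_pred n y i"
    using assms by (simp add: twisted_pred_balancing_scale)
  then show "d i * (balancing_scale \<gamma> G i * y i)
        * (\<gamma> i * twisted_pred n (\<lambda>j. balancing_scale \<gamma> G j * y j) i - balancing_scale \<gamma> G i * y i)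
      = d i * (balancing_scale \<gamma> G i)\<^sup>2 * y i * (G * twisted_pred n y i - y i)"
    by (simp add: power2_eq_square algebra_simps)
qed

lemma diagonally_stable_cyclic_mat_balance:
  assumes n: "n \<ge> 2" and \<gamma>: "\<forall>i<n. \<gamma> i > 0" and G: "G > 0" "G ^ n = (\<Prod>i<n. \<gamma> i)"
  shows "diagonally_stable (cyclic_mat n \<gamma>) \<longleftrightarrow> diagonally_stable (cyclic_mat n (\<lambda>_. G))"
proof -
  let ?r = "balancing_scale \<gamma> G"
  have r: "?r i > 0" if "i < n" for i using balancing_scale_pos[OF \<gamma> G(1) that] .
  have r_nz: "?r i \<noteq> 0" if "i < n" for i using r[OF that] by simp
  show ?thesis
    unfolding diagonally_stable_cyclic_mat_iff[OF n]
  proof (intro iffI; elim exE conjE)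
    fix d assume pos: "\<forall>i<n. d i > 0"
      and neg: "\<forall>x. (\<exists>i<n. x i \<noteq> 0) \<longrightarrow> cyclic_lyapunov_sum n \<gamma> d x < 0"
    have "cyclic_lyapunov_sum n (\<lambda>_. G) (\<lambda>i. d i * (?r i)\<^sup>2) y < 0" if nz: "\<exists>i<n. y i \<noteq> 0" for y
    proof -
      obtain i where i: "i < n" "y i \<noteq> 0" using nz by blast
      then have "\<exists>j<n. ?r j * y j \<noteq> 0" using r_nz by auto
      then have "cyclic_lyapunov_sum n \<gamma> d (\<lambda>j. ?r j * y j) < 0" by (rule neg[rule_format])
      then show ?thesis unfolding cyclic_lyapunov_sum_balance[OF G] .
    qed
    moreover have "\<forall>i<n. d i * (?r i)\<^sup>2 > 0" using pos r_nz by (simp add: zero_less_mult_iff)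
    ultimately show "\<exists>d. (\<forall>i<n. d i > 0) \<and>
        (\<forall>y. (\<exists>i<n. y i \<noteq> 0) \<longrightarrow> cyclic_lyapunov_sum n (\<lambda>_. G) d y < 0)"
      by (intro exI[of _ "\<lambda>i. d i * (?r i)\<^sup>2"]) simp
  next
    fix d assume pos: "\<forall>i<n. d i > 0"
      and neg: "\<forall>y. (\<exists>i<n. y i \<noteq> 0) \<longrightarrow> cyclic_lyapunov_sum n (\<lambda>_. G) d y < 0"
    have "cyclic_lyapunov_sum n \<gamma> (\<lambda>i. d i / (?r i)\<^sup>2) x < 0" if nz: "\<exists>i<n. x i \<noteq> 0" for x
    proof -
      obtain i where i: "i < n" "x i \<noteq> 0" using nz by blast
      then have "\<exists>j<n. x j / ?r j \<noteq> 0" using r_nz by auto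
      then have "cyclic_lyapunov_sum n (\<lambda>_. G) d (\<lambda>j. x j / ?r j) < 0" by (rule neg[rule_format])
      moreover have "cyclic_lyapunov_sum n \<gamma> (\<lambda>i. d i / (?r i)\<^sup>2) x
          = cyclic_lyapunov_sum n \<gamma> (\<lambda>i. d i / (?r i)\<^sup>2) (\<lambda>i. ?r i * (x i / ?r i))"
        using r_nz by (intro cyclic_lyapunov_sum_cong) auto
      moreover have "\<dots> = cyclic_lyapunov_sum n (\<lambda>_. G) d (\<lambda>i. x i / ?r i)"
        unfolding cyclic_lyapunov_sum_balance[OF G] using r_nz by (intro cyclic_lyapunov_sum_cong) auto
      ultimately show ?thesis by linarith
    qed
    moreover have "\<forall>i<n. d i / (?r i)\<^sup>2 > 0" using pos r_nz by (simp add: zero_less_divide_iff)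
    ultimately show "\<exists>d. (\<forall>i<n. d i > 0) \<and>
        (\<forall>x. (\<exists>i<n. x i \<noteq> 0) \<longrightarrow> cyclic_lyapunov_sum n \<gamma> d x < 0)"
      by (intro exI[of _ "\<lambda>i. d i / (?r i)\<^sup>2"]) simp
  qed
qed

lemma twisted_pred_rotation:
  assumes "real n * \<theta> = pi" "i < n"
  shows "cos (real i * \<theta>) * twisted_pred n (\<lambda>j. cos (real j * \<theta>)) i
    + sin (real i * \<theta>) * twisted_pred n (\<lambda>j. sin (real j * \<theta>)) i = cos \<theta>"
proof (cases i)
  case 0
  have "real (n - 1) * \<theta> = pi - \<theta>" using assms by (simp add: of_nat_diff algebra_simps)
  then show ?thesis using 0 by (simp add: twisted_pred_def)
next
  case (Suc k)
  then show ?thesis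
    using cos_diff[of "real i * \<theta>" "real k * \<theta>"] by (simp add: twisted_pred_def algebra_simps)
qed

lemma diagonally_stable_balanced_cyclic_mat_iff:
  assumes n: "n \<ge> 2" and G: "G \<ge> 0"
  shows "diagonally_stable (cyclic_mat n (\<lambda>_. G)) \<longleftrightarrow> cos (pi / n) * G < 1"
proof -
  have sum_eq: "cyclic_lyapunov_sum n (\<lambda>_. G) d y
      = (\<Sum>i<n. d i * (G * (y i * twisted_pred n y i) - (y i)\<^sup>2))" for d y :: "nat \<Rightarrow> real"
    unfolding cyclic_lyapunov_sum_def by (simp add: power2_eq_square algebra_simps)
  define \<theta> where "\<theta> = pi / n"
  have n_\<theta>: "real n * \<theta> = pi" using n by (simp add: \<theta>_def)
  show ?thesis
    unfolding diagonally_stable_cyclic_mat_iff[OF n]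
  proof (intro iffI; (elim exE conjE)?)
    fix d assume pos: "\<forall>i<n. d i > 0"
      and neg: "\<forall>x. (\<exists>i<n. x i \<noteq> 0) \<longrightarrow> cyclic_lyapunov_sum n (\<lambda>_. G) d x < 0"
    \<comment> \<open>real and imaginary parts of a complex eigenvector of the twisted cycle\<close>
    define a where "a = (\<lambda>j. cos (real j * \<theta>))"
    define b where "b = (\<lambda>j. sin (real j * \<theta>))"
    have "\<exists>i<n. a i \<noteq> 0" using n by (intro exI[of _ 0]) (simp add: a_def)
    then have neg_a: "cyclic_lyapunov_sum n (\<lambda>_. G) d a < 0" by (rule neg[rule_format])
    have "\<exists>i<n. b i \<noteq> 0"
    proof (intro exI conjI)
      show "1 < n" using n by simp
      have "pi / real n < pi / 1" using n by (intro divide_strict_left_mono) auto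
      then have "sin \<theta> > 0"
        using n by (intro sin_gt_zero) (simp_all add: \<theta>_def)
      then show "b 1 \<noteq> 0" by (simp add: b_def)
    qed
    then have "cyclic_lyapunov_sum n (\<lambda>_. G) d b < 0" by (rule neg[rule_format])
    with neg_a have "cyclic_lyapunov_sum n (\<lambda>_. G) d a + cyclic_lyapunov_sum n (\<lambda>_. G) d b < 0"
      by simp
    also have "cyclic_lyapunov_sum n (\<lambda>_. G) d a + cyclic_lyapunov_sum n (\<lambda>_. G) d b
        = (\<Sum>i<n. d i * (G * cos \<theta> - 1))"
      unfolding sum_eq sum.distrib[symmetric]
    proof (rule sum.cong)
      fix i assume "i \<in> {..<n}"
      then have rot: "a i * twisted_pred n a i + b i * twisted_pred n b i = cos \<theta>"
        unfolding a_def b_def by (simp add: twisted_pred_rotation[OF n_\<theta>])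
      have "d i * (G * (a i * twisted_pred n a i) - (a i)\<^sup>2)
          + d i * (G * (b i * twisted_pred n b i) - (b i)\<^sup>2)
          = d i * (G * (a i * twisted_pred n a i + b i * twisted_pred n b i) - ((a i)\<^sup>2 + (b i)\<^sup>2))"
        by (simp add: algebra_simps)
      also have "\<dots> = d i * (G * cos \<theta> - 1)" unfolding rot by (simp add: a_def b_def)
      finally show "d i * (G * (a i * twisted_pred n a i) - (a i)\<^sup>2)
          + d i * (G * (b i * twisted_pred n b i) - (b i)\<^sup>2) = d i * (G * cos \<theta> - 1)" .
    qed simp
    finally have "(G * cos \<theta> - 1) * (\<Sum>i<n. d i) < 0" by (simp add: sum_distrib_right mult.commute)
    moreover have "(\<Sum>i<n. d i) > 0" using pos n by (intro sum_pos) (auto simp: lessThan_empty_iff)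
    ultimately show "cos (pi / n) * G < 1" by (simp add: \<theta>_def mult_less_0_iff mult.commute)
  next
    assume cG: "cos (pi / n) * G < 1"
    show "\<exists>d. (\<forall>i<n. d i > 0) \<and>
        (\<forall>y. (\<exists>i<n. y i \<noteq> 0) \<longrightarrow> cyclic_lyapunov_sum n (\<lambda>_. G) d y < 0)"
    proof (intro exI conjI allI impI)
      fix y :: "nat \<Rightarrow> real" assume "\<exists>i<n. y i \<noteq> 0"
      then obtain i where "i < n" "y i \<noteq> 0" by blast
      then have norm_pos: "(\<Sum>i<n. (y i)\<^sup>2) > 0" by (intro sum_pos2[of _ i]) auto
      have "cyclic_lyapunov_sum n (\<lambda>_. G) (\<lambda>_. 1) y = G * twisted_cycle_form n y - (\<Sum>i<n. (y i)\<^sup>2)"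
        by (simp add: sum_eq twisted_cycle_form_def sum_subtractf sum_distrib_left)
      also have "\<dots> \<le> (cos (pi / n) * G - 1) * (\<Sum>i<n. (y i)\<^sup>2)"
        using mult_left_mono[OF twisted_cycle_form_le[OF n] G] by (simp add: algebra_simps)
      also have "\<dots> < 0" using cG norm_pos by (simp add: mult_neg_pos)
      finally show "cyclic_lyapunov_sum n (\<lambda>_. G) (\<lambda>_. 1) y < 0" .
    qed simp
  qed
qed

theorem theorem1:
  fixes n :: nat and \<gamma> :: "nat \<Rightarrow> real"
  assumes "n \<ge> 2" and "\<forall>i < n. \<gamma> i > 0"
  shows "diagonally_stable (cyclic_mat n \<gamma>) \<longleftrightarrow>
           cos (pi / real n) * root n (\<Prod>i<n. \<gamma> i) < 1"
proof -
  define G where "G = root n (\<Prod>i<n. \<gamma> i)"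
  have "(\<Prod>i<n. \<gamma> i) > 0" using assms(2) by (intro prod_pos) auto
  then have G: "G > 0" "G ^ n = (\<Prod>i<n. \<gamma> i)" using assms(1) by (simp_all add: G_def)
  have "diagonally_stable (cyclic_mat n \<gamma>) \<longleftrightarrow> diagonally_stable (cyclic_mat n (\<lambda>_. G))"
    using assms G by (rule diagonally_stable_cyclic_mat_balance)
  also have "\<dots> \<longleftrightarrow> cos (pi / n) * G < 1"
    using assms(1) G(1) by (intro diagonally_stable_balanced_cyclic_mat_iff) auto
  finally show ?thesis by (simp add: G_def)
qed

end
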